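(* For both \textsc{OneMinMax} and \textsc{LOTZ}, the crowding distance contribution $\mathrm{CDC}(x,P)$ is diversity-favouring on $\{0,1\}^n\setminus\{0^n,1^n\}$.
   Context: Search space $\{0,1\}^n$; objectives maximised. $\textsc{OneMinMax}(x)=(\sum_ix_i,\,n-\sum_ix_i)$; $\textsc{LOTZ}(x)=(\mathrm{LO}(x),\mathrm{TZ}(x))$ with $\mathrm{LO}$ the number of leading ones and $\mathrm{TZ}$ the number of trailing zeros. Dominance: $y$ dominates $x$ if $f_i(y)\ge f_i(x)$ for all $i$, strictly for some $i$. Pareto set $X^*$, front $F^*=f(X^* )$. Populations $P$ are sets of mutually non-dominated points with distinct objective vectors. CDC: every point of $P$ starts with distance 0; for each objective $m$, sort $P$ ascending by $f_m$ as $P[1],\dots,P[l]$, set the distance of $P[1]$ and $P[l]$ to $\infty$, and for $2\le i\le l-1$ add $(f_m(P[i+1])-f_m(P[i-1]))/(f_m^{\max}-f_m^{\min})$, where $f_m^{\max},f_m^{\min}$ are the maximum and minimum values of objective $m$. Good: w.r.t. $P$, $x\in P\cap X^*$ is good if some Hamming neighbour $y$ of $x$ satisfies $y\in X^*$ and $f(y)\notin f(P)$; otherwise bad. A measure is diversity-favouring on $S$ (w.r.t. $f$) if for every population $P$ and all $x,y\in P\cap X^*\cap S$ with $x$ bad and $y$ good, $\mathrm{score}(x,P)<\mathrm{score}(y,P)$. *)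

theory Defs
  imports "HOL-Library.Extended_Real"
begin

text \<open>Bit strings of length n are bool lists (True = 1, False = 0).
Bi-objective functions map to pairs of naturals (both maximised).\<close>

type_synonym bitstr = "bool list"
type_synonym biobj = "bitstr \<Rightarrow> nat \<times> nat"

definition cube :: "nat \<Rightarrow> bitstr set" where
  "cube n = {x. length x = n}"

definition oneminmax :: biobj where
  "oneminmax x = (length (filter id x), length x - length (filter id x))"

definition LO :: "bitstr \<Rightarrow> nat" where
  "LO x = length (takeWhile id x)"

definition TZ :: "bitstr \<Rightarrow> nat" where
  "TZ x = length (takeWhile Not (rev x))"

definition lotz :: biobj where
  "lotz x = (LO x, TZ x)"

definition dominates :: "biobj \<Rightarrow> bitstr \<Rightarrow> bitstr \<Rightarrow> bool" where
  "dominates f y x \<longleftrightarrow>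
     fst (f y) \<ge> fst (f x) \<and> snd (f y) \<ge> snd (f x) \<and>
     (fst (f y) > fst (f x) \<or> snd (f y) > snd (f x))"

definition pareto_set :: "biobj \<Rightarrow> nat \<Rightarrow> bitstr set" where
  "pareto_set f n = {x \<in> cube n. \<not> (\<exists>y \<in> cube n. dominates f y x)}"

definition population :: "biobj \<Rightarrow> nat \<Rightarrow> bitstr set \<Rightarrow> bool" where
  "population f n P \<longleftrightarrow> P \<subseteq> cube n \<and> (\<forall>x\<in>P. \<forall>y\<in>P. \<not> dominates f x y) \<and> inj_on f P"

definition hamming_neighbour :: "bitstr \<Rightarrow> bitstr \<Rightarrow> bool" where
  "hamming_neighbour x y \<longleftrightarrow>
     length x = length y \<and> card {i. i < length x \<and> x ! i \<noteq> y ! i} = 1"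

definition good :: "biobj \<Rightarrow> nat \<Rightarrow> bitstr set \<Rightarrow> bitstr \<Rightarrow> bool" where
  "good f n P x \<longleftrightarrow> x \<in> P \<inter> pareto_set f n \<and>
     (\<exists>y. hamming_neighbour x y \<and> y \<in> pareto_set f n \<and> f y \<notin> f ` P)"

definition bad :: "biobj \<Rightarrow> nat \<Rightarrow> bitstr set \<Rightarrow> bitstr \<Rightarrow> bool" where
  "bad f n P x \<longleftrightarrow> x \<in> P \<inter> pareto_set f n \<and> \<not> good f n P x"

definition diversity_favouring ::
    "biobj \<Rightarrow> nat \<Rightarrow> (bitstr \<Rightarrow> bitstr set \<Rightarrow> ereal) \<Rightarrow> bitstr set \<Rightarrow> bool" where
  "diversity_favouring f n score S \<longleftrightarrow>
     (\<forall>P. population f n P \<longrightarrow>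
        (\<forall>x \<in> P \<inter> pareto_set f n \<inter> S. \<forall>y \<in> P \<inter> pareto_set f n \<inter> S.
            bad f n P x \<and> good f n P y \<longrightarrow> score x P < score y P))"

text \<open>P is sorted ascending by g (some sorting, ties broken arbitrarily);
 the first and last get infinity, inner points get (g(next) - g(prev))/(gmax-gmin).\<close>
definition cd_objective :: "(bitstr \<Rightarrow> nat) \<Rightarrow> real \<Rightarrow> real \<Rightarrow> bitstr set \<Rightarrow> bitstr \<Rightarrow> ereal" where
  "cd_objective g gmax gmin P x =
     (let xs = (SOME xs. distinct xs \<and> set xs = P \<and> sorted (map g xs));
          l = length xs;
          i = (THE i. i < l \<and> xs ! i = x)
      in if i = 0 \<or> i = l - 1 then \<infinity>
         else ereal ((real (g (xs ! (i + 1))) - real (g (xs ! (i - 1)))) / (gmax - gmin)))"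

definition obj_max :: "(bitstr \<Rightarrow> nat) \<Rightarrow> nat \<Rightarrow> real" where
  "obj_max g n = real (Max (g ` cube n))"

definition obj_min :: "(bitstr \<Rightarrow> nat) \<Rightarrow> nat \<Rightarrow> real" where
  "obj_min g n = real (Min (g ` cube n))"

definition CDC :: "biobj \<Rightarrow> nat \<Rightarrow> bitstr \<Rightarrow> bitstr set \<Rightarrow> ereal" where
  "CDC f n x P =
     cd_objective (\<lambda>z. fst (f z)) (obj_max (\<lambda>z. fst (f z)) n) (obj_min (\<lambda>z. fst (f z)) n) P x
   + cd_objective (\<lambda>z. snd (f z)) (obj_max (\<lambda>z. snd (f z)) n) (obj_min (\<lambda>z. snd (f z)) n) P x"

end

theory Submission
  imports Defs
begin

(* Both problems have the linear Pareto front {(k, n - k)}: every search point satisfies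
   f1 + f2 <= n, both objectives range over [0, n], and Hamming neighbours on the front have
   adjacent objective vectors. A bad interior front point x with f x = (k, n - k) therefore sees
   both adjacent front vectors (k - 1, n - k + 1) and (k + 1, n - k - 1) in the population, so
   in each objective its sorted neighbours are at distance 1 and CDC x = 2/n + 2/n.
   A good point y misses an adjacent front vector, say the one below it in the first objective.
   Its sorted predecessor p in that objective is not dominated by y, so f2 p > f2 y, and
   f1 p + f2 p <= n then forces f1 p <= f1 y - 2. Hence CDC y >= (3 + 2)/n, unless y is extreme
   in some objective, where CDC y is infinite. *)

section \<open>Crowding distance of a single objective\<close>

lemma strict_sorted_map_nth_less_iff:
  fixes g :: "'a \<Rightarrow> 'b::linorder"
  assumes "sorted_wrt (<) (map g xs)" "i < length xs" "j < length xs"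
  shows "g (xs ! i) < g (xs ! j) \<longleftrightarrow> i < j"
  using sorted_wrt_nth_less[OF assms(1), of i j] sorted_wrt_nth_less[OF assms(1), of j i] assms(2,3)
  by (cases i j rule: linorder_cases) auto

lemma cd_objective_sorted:
  assumes fin: "finite P" and inj: "inj_on g P" and "x \<in> P"
  obtains xs i where "set xs = P" "sorted_wrt (<) (map g xs)" "i < length xs" "xs ! i = x"
    "cd_objective g M m P x =
       (if i = 0 \<or> i = length xs - 1 then \<infinity>
        else ereal ((real (g (xs ! (i + 1))) - real (g (xs ! (i - 1)))) / (M - m)))"
proof -
  have "\<exists>xs. distinct xs \<and> set xs = P \<and> sorted (map g xs)"
  proof -
    obtain ys where "set ys = P" "distinct ys"
      using finite_distinct_list[OF fin] by blast
    then show ?thesis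
      by (intro exI[of _ "sort_key g ys"]) simp
  qed
  then obtain xs where xs: "distinct xs" "set xs = P" "sorted (map g xs)"
    and xs_def: "xs = (SOME xs. distinct xs \<and> set xs = P \<and> sorted (map g xs))"
    by (metis (mono_tags, lifting) someI_ex)
  have "sorted_wrt (<) (map g xs)"
    using xs inj by (simp add: strict_sorted_iff distinct_map)
  moreover obtain i where i: "i < length xs" "xs ! i = x"
    using \<open>x \<in> P\<close> xs(2) by (metis in_set_conv_nth)
  moreover have "(THE i. i < length xs \<and> xs ! i = x) = i"
    using i xs(1) by (auto simp: nth_eq_iff_index_eq)
  ultimately show ?thesis
    using that xs(2) by (simp add: cd_objective_def Let_def xs_def[symmetric])
qed

lemma cd_objective_cases:
  assumes "finite P" "inj_on g P" "x \<in> P"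
  obtains "cd_objective g M m P x = \<infinity>"
  | p q where "p \<in> P" "q \<in> P" "g p < g x" "g x < g q"
      "cd_objective g M m P x = ereal ((real (g q) - real (g p)) / (M - m))"
proof -
  obtain xs i where xs: "set xs = P" "sorted_wrt (<) (map g xs)" "i < length xs" "xs ! i = x"
    and cd: "cd_objective g M m P x =
       (if i = 0 \<or> i = length xs - 1 then \<infinity>
        else ereal ((real (g (xs ! (i + 1))) - real (g (xs ! (i - 1)))) / (M - m)))"
    using cd_objective_sorted[OF assms] .
  show ?thesis
  proof (cases "i = 0 \<or> i = length xs - 1")
    case True
    then show ?thesis using cd that(1) by simp
  next
    case False
    then have "i - 1 < i" "i < i + 1" "i + 1 < length xs"
      using xs(3) by auto
    then have "g (xs ! (i - 1)) < g x" "g x < g (xs ! (i + 1))"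
      using strict_sorted_map_nth_less_iff[OF xs(2)] xs(3,4) by auto
    moreover have "xs ! (i - 1) \<in> P" "xs ! (i + 1) \<in> P"
      using xs(1,3) \<open>i + 1 < length xs\<close> by auto
    ultimately show ?thesis
      using that(2) cd False by simp
  qed
qed

lemma cd_objective_consecutive:
  assumes "finite P" "inj_on g P" "x \<in> P" "a \<in> P" "c \<in> P"
    and "g a + 1 = g x" "g c = g x + 1"
  shows "cd_objective g M m P x = ereal (2 / (M - m))"
proof -
  obtain xs i where xs: "set xs = P" "sorted_wrt (<) (map g xs)" "i < length xs" "xs ! i = x"
    and cd: "cd_objective g M m P x =
       (if i = 0 \<or> i = length xs - 1 then \<infinity>
        else ereal ((real (g (xs ! (i + 1))) - real (g (xs ! (i - 1)))) / (M - m)))"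
    using cd_objective_sorted[OF assms(1-3)] .
  note less_iff = strict_sorted_map_nth_less_iff[OF xs(2)]
  obtain ia ic where ia: "ia < length xs" "xs ! ia = a" and ic: "ic < length xs" "xs ! ic = c"
    using assms(4,5) xs(1) by (metis in_set_conv_nth)
  have "ia < i" "i < ic"
    using less_iff[OF ia(1) xs(3)] less_iff[OF xs(3) ic(1)] ia ic xs(4) assms(6,7) by auto
  then have inner: "i \<noteq> 0" "i \<noteq> length xs - 1" "i + 1 < length xs"
    using ic(1) by auto
  have "g (xs ! (i - 1)) < g x" "\<not> g (xs ! (i - 1)) < g a"
    using less_iff[of "i - 1" i] less_iff[of "i - 1" ia] \<open>ia < i\<close> ia xs(3,4) by auto
  moreover have "g x < g (xs ! (i + 1))" "\<not> g c < g (xs ! (i + 1))"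
    using less_iff[of i "i + 1"] less_iff[of ic "i + 1"] \<open>i < ic\<close> ic inner(3) xs(4) by auto
  ultimately have "g (xs ! (i - 1)) + 1 = g x" "g (xs ! (i + 1)) = g x + 1"
    using assms(6,7) by linarith+
  then show ?thesis
    using cd inner by simp
qed

lemma finite_cube: "finite (cube n)"
proof -
  have "cube n = {xs. set xs \<subseteq> UNIV \<and> length xs = n}"
    by (auto simp: cube_def)
  then show ?thesis
    using finite_lists_length_eq[of "UNIV :: bool set" n] by simp
qed

lemma obj_max_minus_obj_min:
  assumes "\<And>z. z \<in> cube n \<Longrightarrow> g z \<le> n"
    and "x\<^sub>1 \<in> cube n" "g x\<^sub>1 = n" "x\<^sub>0 \<in> cube n" "g x\<^sub>0 = 0"
  shows "obj_max g n - obj_min g n = real n"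
proof -
  have "Max (g ` cube n) = n" "Min (g ` cube n) = 0"
    using assms finite_cube by (auto intro!: Max_eqI Min_eqI)
  then show ?thesis
    by (simp add: obj_max_def obj_min_def)
qed

section \<open>Populations on a linear front\<close>

lemma population_finite: "population f n P \<Longrightarrow> finite P"
  using finite_cube unfolding population_def by (meson finite_subset)

lemma population_fst_less_iff:
  assumes "population f n P" "z \<in> P" "w \<in> P"
  shows "fst (f z) < fst (f w) \<longleftrightarrow> snd (f w) < snd (f z)"
  using assms unfolding population_def dominates_def
  by (metis linorder_not_le order_less_imp_le)

lemma population_fst_eq_iff:
  assumes "population f n P" "z \<in> P" "w \<in> P"
  shows "fst (f z) = fst (f w) \<longleftrightarrow> z = w"
proof
  assume "fst (f z) = fst (f w)"
  moreover from this have "snd (f z) = snd (f w)"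
    using population_fst_less_iff[OF assms] population_fst_less_iff[OF assms(1,3,2)]
    by (metis less_irrefl linorder_neqE_nat)
  ultimately show "z = w"
    using assms unfolding population_def inj_on_def by (simp add: prod_eq_iff)
qed simp

lemma population_inj_fst: "population f n P \<Longrightarrow> inj_on (\<lambda>z. fst (f z)) P"
  by (auto intro: inj_onI simp: population_fst_eq_iff)

lemma population_inj_snd: "population f n P \<Longrightarrow> inj_on (\<lambda>z. snd (f z)) P"
  by (rule inj_onI) (metis population_fst_eq_iff population_fst_less_iff linorder_neqE_nat less_irrefl)

definition front_step :: "biobj \<Rightarrow> bitstr \<Rightarrow> bitstr \<Rightarrow> bool" where
  "front_step f a b \<longleftrightarrow> fst (f b) = fst (f a) + 1 \<and> snd (f a) = snd (f b) + 1"

lemma front_step_unique: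
  "front_step f a y \<Longrightarrow> front_step f b y \<Longrightarrow> f a = f b"
  "front_step f y a \<Longrightarrow> front_step f y b \<Longrightarrow> f a = f b"
  by (simp_all add: front_step_def prod_eq_iff)

lemma CDC_front_interior:
  assumes pop: "population f n P"
    and range_fst: "obj_max (\<lambda>z. fst (f z)) n - obj_min (\<lambda>z. fst (f z)) n = real n"
    and range_snd: "obj_max (\<lambda>z. snd (f z)) n - obj_min (\<lambda>z. snd (f z)) n = real n"
    and "x \<in> P" "a \<in> P" "c \<in> P" "front_step f a x" "front_step f x c"
  shows "CDC f n x P = ereal (4 / real n)"
proof -
  note fin = population_finite[OF pop]
  have "cd_objective (\<lambda>z. fst (f z)) (obj_max (\<lambda>z. fst (f z)) n) (obj_min (\<lambda>z. fst (f z)) n) P x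
      = ereal (2 / real n)"
    using cd_objective_consecutive[OF fin population_inj_fst[OF pop] \<open>x \<in> P\<close> \<open>a \<in> P\<close> \<open>c \<in> P\<close>]
      assms(7,8) range_fst by (simp add: front_step_def)
  moreover have "cd_objective (\<lambda>z. snd (f z)) (obj_max (\<lambda>z. snd (f z)) n) (obj_min (\<lambda>z. snd (f z)) n) P x
      = ereal (2 / real n)"
    using cd_objective_consecutive[OF fin population_inj_snd[OF pop] \<open>x \<in> P\<close> \<open>c \<in> P\<close> \<open>a \<in> P\<close>]
      assms(7,8) range_snd by (simp add: front_step_def)
  ultimately show ?thesis
    by (simp add: CDC_def)
qed

lemma CDC_front_gap:
  assumes pop: "population f n P" and "n > 0"
    and range_fst: "obj_max (\<lambda>z. fst (f z)) n - obj_min (\<lambda>z. fst (f z)) n = real n"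
    and range_snd: "obj_max (\<lambda>z. snd (f z)) n - obj_min (\<lambda>z. snd (f z)) n = real n"
    and sum_le: "\<And>z. z \<in> P \<Longrightarrow> fst (f z) + snd (f z) \<le> n"
    and "y \<in> P" and on_front: "fst (f y) + snd (f y) = n"
    and gap: "\<not> (\<exists>a\<in>P. front_step f a y) \<or> \<not> (\<exists>c\<in>P. front_step f y c)"
  shows "ereal (4 / real n) < CDC f n y P"
proof -
  let ?g1 = "\<lambda>z. fst (f z)" and ?g2 = "\<lambda>z. snd (f z)"
  let ?cd1 = "cd_objective ?g1 (obj_max ?g1 n) (obj_min ?g1 n) P y"
  let ?cd2 = "cd_objective ?g2 (obj_max ?g2 n) (obj_min ?g2 n) P y"
  have CDC: "CDC f n y P = ?cd1 + ?cd2"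
    by (simp add: CDC_def)
  note fin = population_finite[OF pop]
  note cases1 = cd_objective_cases[OF fin population_inj_fst[OF pop] \<open>y \<in> P\<close>,
      of "obj_max ?g1 n" "obj_min ?g1 n"]
  note cases2 = cd_objective_cases[OF fin population_inj_snd[OF pop] \<open>y \<in> P\<close>,
      of "obj_max ?g2 n" "obj_min ?g2 n"]
  show ?thesis
  proof (cases rule: cases1)
    case 1
    then show ?thesis
      by (cases rule: cases2) (simp_all add: CDC)
  next
    case (2 p q)
    note pq = this
    show ?thesis
    proof (cases rule: cases2)
      case 1
      then show ?thesis
        using pq(5) by (simp add: CDC)
    next
      case (2 p' q')
      have "snd (f y) < snd (f p)" "fst (f y) < fst (f p')"
        using population_fst_less_iff[OF pop] pq(1,3) 2(1,3) \<open>y \<in> P\<close> by blast+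
      moreover have "fst (f p) + snd (f p) \<le> n" "fst (f p') + snd (f p') \<le> n"
        using sum_le pq(1) 2(1) by auto
      moreover have "\<not> front_step f p y \<or> \<not> front_step f y p'"
        using gap pq(1) 2(1) by blast
      \<comment> \<open>A sorted neighbour of y that is not an adjacent front point is at distance at least 2.\<close>
      ultimately have "5 \<le> (real (fst (f q)) - real (fst (f p))) + (real (snd (f q')) - real (snd (f p')))"
        using pq(3,4) 2(3,4) on_front unfolding front_step_def by linarith
      then have "4 / real n < (real (fst (f q)) - real (fst (f p))) / real n
          + (real (snd (f q')) - real (snd (f p'))) / real n"
        using \<open>n > 0\<close> by (simp add: add_divide_distrib[symmetric] divide_strict_right_mono)
      then show ?thesis
        using pq(5) 2(5) range_fst range_snd by (simp add: CDC)
    qed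
  qed
qed

lemma bad_front_steps:
  assumes "bad f n P x"
    and "hamming_neighbour x z1" "z1 \<in> pareto_set f n" "front_step f z1 x"
    and "hamming_neighbour x z2" "z2 \<in> pareto_set f n" "front_step f x z2"
  obtains a c where "a \<in> P" "front_step f a x" "c \<in> P" "front_step f x c"
proof -
  have "f z \<in> f ` P" if "hamming_neighbour x z" "z \<in> pareto_set f n" for z
    using assms(1) that unfolding bad_def good_def by blast
  then obtain a c where "a \<in> P" "f a = f z1" "c \<in> P" "f c = f z2"
    using assms(2,3,5,6) by (metis imageE)
  moreover from this have "front_step f a x" "front_step f x c"
    using assms(4,7) by (simp_all add: front_step_def)
  ultimately show ?thesis
    using that by blast
qed

lemma good_front_gap:
  assumes "good f n P y"
    and neighbour_steps: "\<And>z. z \<in> pareto_set f n \<Longrightarrow> hamming_neighbour y z \<Longrightarrow>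
      front_step f y z \<or> front_step f z y"
  shows "\<not> (\<exists>a\<in>P. front_step f a y) \<or> \<not> (\<exists>c\<in>P. front_step f y c)"
proof -
  obtain z where z: "hamming_neighbour y z" "z \<in> pareto_set f n" "f z \<notin> f ` P"
    using assms(1) unfolding good_def by blast
  then have "front_step f y z \<or> front_step f z y"
    using neighbour_steps by blast
  moreover have "f a \<noteq> f z" if "a \<in> P" for a
    using that z(3) by (metis imageI)
  ultimately show ?thesis
    using front_step_unique by metis
qed

theorem CDC_diversity_favouring_linear_front:
  assumes range_fst: "obj_max (\<lambda>z. fst (f z)) n - obj_min (\<lambda>z. fst (f z)) n = real n"
    and range_snd: "obj_max (\<lambda>z. snd (f z)) n - obj_min (\<lambda>z. snd (f z)) n = real n"
    and sum_le: "\<And>x. x \<in> cube n \<Longrightarrow> fst (f x) + snd (f x) \<le> n"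
    and on_front: "\<And>x. x \<in> pareto_set f n \<Longrightarrow> fst (f x) + snd (f x) = n"
    and interior_steps: "\<And>x. x \<in> pareto_set f n \<Longrightarrow> x \<notin> {replicate n False, replicate n True} \<Longrightarrow>
      \<exists>z1 z2. hamming_neighbour x z1 \<and> z1 \<in> pareto_set f n \<and> front_step f z1 x \<and>
              hamming_neighbour x z2 \<and> z2 \<in> pareto_set f n \<and> front_step f x z2"
    and neighbour_steps: "\<And>y z. y \<in> pareto_set f n \<Longrightarrow> z \<in> pareto_set f n \<Longrightarrow>
      hamming_neighbour y z \<Longrightarrow> front_step f y z \<or> front_step f z y"
  shows "diversity_favouring f n (CDC f n) (cube n - {replicate n False, replicate n True})"
  unfolding diversity_favouring_def
proof (intro allI impI ballI)
  fix P x y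
  assume pop: "population f n P"
    and x: "x \<in> P \<inter> pareto_set f n \<inter> (cube n - {replicate n False, replicate n True})"
    and y: "y \<in> P \<inter> pareto_set f n \<inter> (cube n - {replicate n False, replicate n True})"
    and bad_good: "bad f n P x \<and> good f n P y"
  have "n > 0"
    using x by (cases n) (auto simp: cube_def)
  obtain z1 z2 where "hamming_neighbour x z1" "z1 \<in> pareto_set f n" "front_step f z1 x"
    "hamming_neighbour x z2" "z2 \<in> pareto_set f n" "front_step f x z2"
    using interior_steps x by blast
  then obtain a c where "a \<in> P" "front_step f a x" "c \<in> P" "front_step f x c"
    using bad_front_steps bad_good by metis
  then have x_value: "CDC f n x P = ereal (4 / real n)"
    using CDC_front_interior[OF pop range_fst range_snd] x by blast
  have "\<And>z. z \<in> P \<Longrightarrow> fst (f z) + snd (f z) \<le> n"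
    using pop sum_le by (auto simp: population_def)
  moreover have "\<not> (\<exists>a\<in>P. front_step f a y) \<or> \<not> (\<exists>c\<in>P. front_step f y c)"
    using good_front_gap[of f n P y] bad_good neighbour_steps y by blast
  ultimately have "ereal (4 / real n) < CDC f n y P"
    using CDC_front_gap[OF pop \<open>n > 0\<close> range_fst range_snd] y on_front by blast
  with x_value show "CDC f n x P < CDC f n y P"
    by simp
qed

abbreviation ones :: "bitstr \<Rightarrow> nat" where
  "ones x \<equiv> length (filter id x)"

lemma ones_list_update:
  "i < length x \<Longrightarrow> ones (x[i := v]) + of_bool (x ! i) = ones x + of_bool v"
proof (induction x arbitrary: i)
  case (Cons b x)
  then show ?case
    by (cases i) auto
qed simp

lemma ex_nth_neq_if_neq_replicate: "length x = n \<Longrightarrow> x \<noteq> replicate n b \<Longrightarrow> \<exists>i<n. x ! i \<noteq> b"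
  by (metis in_set_conv_nth replicate_eqI)

lemma hamming_neighbour_iff_flip:
  "hamming_neighbour x y \<longleftrightarrow> (\<exists>i<length x. y = x[i := \<not> x ! i])"
proof
  assume "hamming_neighbour x y"
  then have len: "length x = length y" and "card {j. j < length x \<and> x ! j \<noteq> y ! j} = 1"
    by (auto simp: hamming_neighbour_def)
  then obtain i where "{j. j < length x \<and> x ! j \<noteq> y ! j} = {i}"
    by (meson card_1_singletonE)
  then have i: "i < length x" and differ: "\<And>j. j < length x \<Longrightarrow> x ! j \<noteq> y ! j \<longleftrightarrow> j = i"
    by blast+
  have "y = x[i := \<not> x ! i]"
  proof (rule nth_equalityI)
    fix j
    assume "j < length y"
    then show "y ! j = x[i := \<not> x ! i] ! j"
      using differ[of j] len by (cases "j = i") auto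
  qed (simp add: len)
  with i show "\<exists>i<length x. y = x[i := \<not> x ! i]"
    by blast
next
  assume "\<exists>i<length x. y = x[i := \<not> x ! i]"
  then obtain i where "i < length x" "y = x[i := \<not> x ! i]"
    by blast
  moreover from this have "{j. j < length x \<and> x ! j \<noteq> y ! j} = {i}"
    by (auto simp: nth_list_update)
  ultimately show "hamming_neighbour x y"
    by (simp add: hamming_neighbour_def)
qed

lemma hamming_neighbour_sym:
  assumes "hamming_neighbour x y"
  shows "hamming_neighbour y x"
proof -
  obtain i where "i < length x" "y = x[i := \<not> x ! i]"
    using assms hamming_neighbour_iff_flip by blast
  then have "i < length y" "x = y[i := \<not> y ! i]"
    by simp_all
  then show ?thesis
    using hamming_neighbour_iff_flip by blast
qed

lemma hamming_neighbour_ones: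
  assumes "hamming_neighbour x y"
  shows "ones y = ones x + 1 \<or> ones x = ones y + 1"
proof -
  obtain i where "i < length x" "y = x[i := \<not> x ! i]"
    using assms hamming_neighbour_iff_flip by blast
  then have "ones y + of_bool (x ! i) = ones x + of_bool (\<not> x ! i)"
    using ones_list_update by blast
  then show ?thesis
    by (cases "x ! i") auto
qed

section \<open>OneMinMax\<close>

lemma oneminmax_pareto_set: "pareto_set oneminmax n = cube n"
proof -
  have "\<not> dominates oneminmax y x" if "x \<in> cube n" "y \<in> cube n" for x y
    using that length_filter_le[of id x] length_filter_le[of id y]
    by (auto simp: dominates_def oneminmax_def cube_def)
  then show ?thesis
    by (auto simp: pareto_set_def)
qed

lemma front_step_oneminmax:
  assumes "length a = length b"
  shows "front_step oneminmax a b \<longleftrightarrow> ones b = ones a + 1"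
proof -
  have "ones b \<le> length b"
    by (rule length_filter_le)
  with assms show ?thesis
    unfolding front_step_def oneminmax_def fst_conv snd_conv by arith
qed

lemma oneminmax_CDC_diversity_favouring:
  "diversity_favouring oneminmax n (CDC oneminmax n) (cube n - {replicate n False, replicate n True})"
proof (rule CDC_diversity_favouring_linear_front)
  show "obj_max (\<lambda>z. fst (oneminmax z)) n - obj_min (\<lambda>z. fst (oneminmax z)) n = real n"
    by (rule obj_max_minus_obj_min[of _ _ "replicate n True" "replicate n False"])
      (auto simp: oneminmax_def cube_def intro: order_trans[OF length_filter_le])
  show "obj_max (\<lambda>z. snd (oneminmax z)) n - obj_min (\<lambda>z. snd (oneminmax z)) n = real n"
    by (rule obj_max_minus_obj_min[of _ _ "replicate n False" "replicate n True"])
      (auto simp: oneminmax_def cube_def)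
  show "fst (oneminmax x) + snd (oneminmax x) \<le> n" if "x \<in> cube n" for x
    using that length_filter_le[of id x] by (simp add: oneminmax_def cube_def)
  show "fst (oneminmax x) + snd (oneminmax x) = n" if "x \<in> pareto_set oneminmax n" for x
    using that length_filter_le[of id x] by (simp add: oneminmax_pareto_set oneminmax_def cube_def)
  show "\<exists>z1 z2. hamming_neighbour x z1 \<and> z1 \<in> pareto_set oneminmax n \<and> front_step oneminmax z1 x \<and>
      hamming_neighbour x z2 \<and> z2 \<in> pareto_set oneminmax n \<and> front_step oneminmax x z2"
    if x: "x \<in> pareto_set oneminmax n" "x \<notin> {replicate n False, replicate n True}" for x
  proof -
    have len: "length x = n"
      using x(1) by (simp add: oneminmax_pareto_set cube_def)
    obtain i j where "i < n" "x ! i" "j < n" "\<not> x ! j"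
      using ex_nth_neq_if_neq_replicate[OF len] x(2) by blast
    then show ?thesis
      using len ones_list_update[of i x False] ones_list_update[of j x True]
      by (intro exI[of _ "x[i := False]"] exI[of _ "x[j := True]"])
        (auto simp: hamming_neighbour_iff_flip oneminmax_pareto_set cube_def front_step_oneminmax)
  qed
  show "front_step oneminmax y z \<or> front_step oneminmax z y"
    if "hamming_neighbour y z" for y z
    using that hamming_neighbour_ones[OF that] front_step_oneminmax
    by (auto simp: hamming_neighbour_def)
qed

section \<open>LOTZ\<close>

definition ones_zeros :: "nat \<Rightarrow> nat \<Rightarrow> bitstr" where
  "ones_zeros k n = replicate k True @ replicate (n - k) False"

lemma length_ones_zeros: "k \<le> n \<Longrightarrow> length (ones_zeros k n) = n"
  by (simp add: ones_zeros_def)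

lemma nth_ones_zeros: "i < n \<Longrightarrow> ones_zeros k n ! i = (i < k)"
  by (simp add: ones_zeros_def nth_append)

lemma ones_ones_zeros: "ones (ones_zeros k n) = k"
  by (simp add: ones_zeros_def)

lemma LO_ones_zeros: "k \<le> n \<Longrightarrow> LO (ones_zeros k n) = k"
  unfolding LO_def ones_zeros_def by (cases "n - k") (auto simp: takeWhile_append)

lemma TZ_ones_zeros: "k \<le> n \<Longrightarrow> TZ (ones_zeros k n) = n - k"
  unfolding TZ_def ones_zeros_def by (cases k) (auto simp: takeWhile_append)

lemma LO_nth: "i < LO x \<Longrightarrow> x ! i"
  unfolding LO_def by (metis nth_mem set_takeWhileD takeWhile_nth id_apply)

lemma TZ_nth:
  assumes "i < length x" "length x - TZ x \<le> i"
  shows "\<not> x ! i"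
proof -
  let ?j = "length x - 1 - i"
  have j: "?j < TZ x"
    using assms by linarith
  then have "\<not> takeWhile Not (rev x) ! ?j"
    unfolding TZ_def by (metis nth_mem set_takeWhileD)
  moreover have "takeWhile Not (rev x) ! ?j = x ! i"
    using j assms(1) unfolding TZ_def by (simp add: takeWhile_nth rev_nth)
  ultimately show ?thesis
    by simp
qed

lemma LO_le_length: "LO x \<le> length x"
  unfolding LO_def by (rule length_takeWhile_le)

lemma TZ_le_length: "TZ x \<le> length x"
  unfolding TZ_def by (metis length_rev length_takeWhile_le)

lemma LO_TZ_le: "LO x + TZ x \<le> length x"
proof (rule ccontr)
  assume "\<not> ?thesis"
  moreover note LO_le_length[of x] TZ_le_length[of x]
  ultimately have "length x - TZ x < LO x" "length x - TZ x < length x"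
    by linarith+
  then show False
    using LO_nth TZ_nth by blast
qed

lemma ones_zeros_LO:
  assumes "LO x + TZ x = length x"
  shows "x = ones_zeros (LO x) (length x)"
proof (rule nth_equalityI)
  fix i
  assume "i < length x"
  then show "x ! i = ones_zeros (LO x) (length x) ! i"
    using LO_nth[of i x] TZ_nth[of i x] assms by (cases "i < LO x") (auto simp: nth_ones_zeros)
qed (use assms in \<open>simp add: length_ones_zeros\<close>)

lemma lotz_pareto_set: "pareto_set lotz n = {ones_zeros k n | k. k \<le> n}"
proof (intro set_eqI iffI)
  fix x
  assume x: "x \<in> pareto_set lotz n"
  then have len: "length x = n"
    by (simp add: pareto_set_def cube_def)
  have "\<not> LO x + TZ x < n"
  proof
    assume "LO x + TZ x < n"
    then have "dominates lotz (ones_zeros (LO x) n) x"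
      by (simp add: dominates_def lotz_def LO_ones_zeros TZ_ones_zeros; linarith)
    moreover have "ones_zeros (LO x) n \<in> cube n"
      using LO_TZ_le[of x] len by (simp add: cube_def length_ones_zeros)
    ultimately show False
      using x by (auto simp: pareto_set_def)
  qed
  then have "x = ones_zeros (LO x) n"
    using ones_zeros_LO LO_TZ_le[of x] len by (metis le_neq_implies_less)
  then show "x \<in> {ones_zeros k n | k. k \<le> n}"
    using LO_TZ_le[of x] len by auto
next
  fix x
  assume "x \<in> {ones_zeros k n | k. k \<le> n}"
  then obtain k where "k \<le> n" "x = ones_zeros k n"
    by blast
  moreover have "\<not> dominates lotz y (ones_zeros k n)" if "y \<in> cube n" for y
    using that \<open>k \<le> n\<close> LO_TZ_le[of y]
    by (auto simp: dominates_def lotz_def cube_def LO_ones_zeros TZ_ones_zeros)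
  ultimately show "x \<in> pareto_set lotz n"
    by (simp add: pareto_set_def cube_def length_ones_zeros)
qed

lemma hamming_neighbour_ones_zeros:
  assumes "k < n"
  shows "hamming_neighbour (ones_zeros k n) (ones_zeros (Suc k) n)"
proof -
  have "ones_zeros (Suc k) n = (ones_zeros k n)[k := \<not> ones_zeros k n ! k]"
    using assms by (intro nth_equalityI) (auto simp: length_ones_zeros nth_ones_zeros nth_list_update)
  then show ?thesis
    using assms by (auto simp: hamming_neighbour_iff_flip length_ones_zeros)
qed

lemma front_step_lotz_ones_zeros: "k < n \<Longrightarrow> front_step lotz (ones_zeros k n) (ones_zeros (Suc k) n)"
  by (simp add: front_step_def lotz_def LO_ones_zeros TZ_ones_zeros)

lemma lotz_CDC_diversity_favouring:
  "diversity_favouring lotz n (CDC lotz n) (cube n - {replicate n False, replicate n True})"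
proof (rule CDC_diversity_favouring_linear_front)
  show "obj_max (\<lambda>z. fst (lotz z)) n - obj_min (\<lambda>z. fst (lotz z)) n = real n"
    by (rule obj_max_minus_obj_min[of _ _ "ones_zeros n n" "ones_zeros 0 n"])
      (auto simp: lotz_def cube_def length_ones_zeros LO_ones_zeros LO_le_length)
  show "obj_max (\<lambda>z. snd (lotz z)) n - obj_min (\<lambda>z. snd (lotz z)) n = real n"
    by (rule obj_max_minus_obj_min[of _ _ "ones_zeros 0 n" "ones_zeros n n"])
      (auto simp: lotz_def cube_def length_ones_zeros TZ_ones_zeros TZ_le_length)
  show "fst (lotz x) + snd (lotz x) \<le> n" if "x \<in> cube n" for x
    using that LO_TZ_le[of x] by (simp add: lotz_def cube_def)
  show "fst (lotz x) + snd (lotz x) = n" if "x \<in> pareto_set lotz n" for x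
    using that by (auto simp: lotz_pareto_set lotz_def LO_ones_zeros TZ_ones_zeros)
  show "\<exists>z1 z2. hamming_neighbour x z1 \<and> z1 \<in> pareto_set lotz n \<and> front_step lotz z1 x \<and>
      hamming_neighbour x z2 \<and> z2 \<in> pareto_set lotz n \<and> front_step lotz x z2"
    if x: "x \<in> pareto_set lotz n" "x \<notin> {replicate n False, replicate n True}" for x
  proof -
    obtain k where k: "k \<le> n" "x = ones_zeros k n"
      using x(1) by (auto simp: lotz_pareto_set)
    moreover have "ones_zeros 0 n = replicate n False" "ones_zeros n n = replicate n True"
      by (simp_all add: ones_zeros_def)
    with x(2) k have "k \<noteq> 0" "k \<noteq> n"
      by (metis insertCI)+
    ultimately obtain j where "Suc j = k" "Suc k \<le> n"
      by (metis Suc_pred le_neq_implies_less less_eq_Suc_le not_gr_zero)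
    then show ?thesis
      using k hamming_neighbour_ones_zeros hamming_neighbour_sym front_step_lotz_ones_zeros
      by (intro exI[of _ "ones_zeros j n"] exI[of _ "ones_zeros (Suc k) n"])
        (auto simp: lotz_pareto_set Suc_le_eq)
  qed
  show "front_step lotz y z \<or> front_step lotz z y"
    if yz: "y \<in> pareto_set lotz n" "z \<in> pareto_set lotz n" "hamming_neighbour y z" for y z
  proof -
    obtain k l where "k \<le> n" "y = ones_zeros k n" "l \<le> n" "z = ones_zeros l n"
      using yz(1,2) by (auto simp: lotz_pareto_set)
    then show ?thesis
      using hamming_neighbour_ones[OF yz(3)] front_step_lotz_ones_zeros
      by (auto simp: ones_ones_zeros Suc_le_eq)
  qed
qed

theorem lemma2:
  fixes n :: nat
  shows "diversity_favouring oneminmax n (CDC oneminmax n)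
           (cube n - {replicate n False, replicate n True})
       \<and> diversity_favouring lotz n (CDC lotz n)
           (cube n - {replicate n False, replicate n True})"
  using oneminmax_CDC_diversity_favouring lotz_CDC_diversity_favouring by blast

end
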